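(* Let $1\le k\le n-1$. The complex $\Delta^{NC}_{k,n}$ has the following properties. (i) The map $i\mapsto n+1-i$ on $[n]$ induces (by acting on $k$-subsets) an automorphism of $\Delta^{NC}_{k,n}$. (ii) The map $I\mapsto [n]\setminus I$ (viewing vectors as subsets) induces an isomorphism $\Delta^{NC}_{k,n}\to\Delta^{NC}_{n-k,n}$; i.e. $I,J\in V_{k,n}$ are noncrossing iff $[n]\setminus I$, $[n]\setminus J\in V_{n-k,n}$ are noncrossing. (iii) For $I\ne J\in V_{k,n}$, let $S=I\triangle J$, $m=|I\setminus J|=|J\setminus I|$, and relabel $S$ order-preservingly as $[2m]$; then $I\setminus J$ and $J\setminus I$ become elements of $V_{m,2m}$, and $I,J$ are noncrossing in $V_{k,n}$ iff these two elements of $V_{m,2m}$ are noncrossing. (iv) For $b\in[n]$, the restriction of $\Delta^{NC}_{k,n}$ to the vertices $I$ with $b\in I$ is isomorphic to $\Delta^{NC}_{k-1,n-1}$, and the restriction to vertices with $b\notin I$ is isomorphic to $\Delta^{NC}_{k,n-1}$ (via deleting $b$ and relabeling $[n]\setminus\{b\}$ order-preservingly as $[n-1]$). (v) For each $c\in[n]$, the vector obtained by sorting the cyclic interval $\{c,c+1,\dots,c+k-1\}$ (entries taken modulo $n$ in $\{1,\dots,n\}$) is noncrossing with every element of $V_{k,n}$; hence these $n$ vectors belong to every maximal face of $\Delta^{NC}_{k,n}$.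
   Context: $[n]=\{1,\dots,n\}$. $V_{k,n}$ denotes the set of integer vectors $I=(i_1,\dots,i_k)$ with $1\le i_1<\dots<i_k\le n$, identified with $k$-subsets of $[n]$. Two arcs $(p<p')$ and $(q<q')$ cross if $p<q<p'<q'$ or $q<p<q'<p'$. Two vectors $I=(i_1,\dots,i_k)$, $J=(j_1,\dots,j_k)\in V_{k,n}$ are noncrossing if for all indices $1\le a<b\le k$ such that $i_\ell=j_\ell$ for all $a<\ell<b$, the arcs $(i_a<i_b)$ and $(j_a<j_b)$ do not cross. The noncrossing complex $\Delta^{NC}_{k,n}$ is the flag simplicial complex with vertex set $V_{k,n}$ whose faces are the sets of pairwise noncrossing vectors. *)

theory Defs
  imports Main
begin

text \<open>Vertices of the noncrossing complex: k-subsets of [n] = {1..n}, identified with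
  increasing integer vectors (the vector of I is sorted_list_of_set I, 0-indexed).\<close>
definition V :: "nat \<Rightarrow> nat \<Rightarrow> nat set set" where
  "V k n = {I. I \<subseteq> {1..n} \<and> card I = k}"

definition arcs_cross :: "nat \<Rightarrow> nat \<Rightarrow> nat \<Rightarrow> nat \<Rightarrow> bool" where
  "arcs_cross p p' q q' \<longleftrightarrow> (p < q \<and> q < p' \<and> p' < q') \<or> (q < p \<and> p < q' \<and> q' < p')"

text \<open>Noncrossing vectors (indices shifted to start at 0).\<close>
definition noncrossing :: "nat set \<Rightarrow> nat set \<Rightarrow> bool" where
  "noncrossing I J \<longleftrightarrow>
     (let xs = sorted_list_of_set I; ys = sorted_list_of_set J in
      \<forall>a b. a < b \<and> b < length xs \<and> b < length ys \<and>
            (\<forall>l. a < l \<and> l < b \<longrightarrow> xs ! l = ys ! l) \<longrightarrow>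
            \<not> arcs_cross (xs ! a) (xs ! b) (ys ! a) (ys ! b))"

definition NC_faces :: "nat \<Rightarrow> nat \<Rightarrow> nat set set set" where
  "NC_faces k n = {F. F \<subseteq> V k n \<and> (\<forall>I\<in>F. \<forall>J\<in>F. noncrossing I J)}"

definition restrict_faces :: "'a set set \<Rightarrow> 'a set \<Rightarrow> 'a set set" where
  "restrict_faces \<Phi> W = {F \<in> \<Phi>. F \<subseteq> W}"

definition simplicial_iso ::
  "('a \<Rightarrow> 'b) \<Rightarrow> 'a set \<Rightarrow> 'a set set \<Rightarrow> 'b set \<Rightarrow> 'b set set \<Rightarrow> bool" where
  "simplicial_iso f V1 \<Phi> V2 \<Psi> \<longleftrightarrow>
     bij_betw f V1 V2 \<and> (\<forall>F. F \<subseteq> V1 \<longrightarrow> (F \<in> \<Phi> \<longleftrightarrow> f ` F \<in> \<Psi>))"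

definition maximal_face :: "'a set set \<Rightarrow> 'a set \<Rightarrow> bool" where
  "maximal_face \<Phi> F \<longleftrightarrow> F \<in> \<Phi> \<and> (\<forall>G\<in>\<Phi>. F \<subseteq> G \<longrightarrow> G = F)"

definition relabel :: "nat set \<Rightarrow> nat \<Rightarrow> nat" where
  "relabel S x = card {y \<in> S. y \<le> x}"

definition del_relabel :: "nat \<Rightarrow> nat \<Rightarrow> nat" where
  "del_relabel b x = (if x < b then x else x - 1)"

definition cyc_interval :: "nat \<Rightarrow> nat \<Rightarrow> nat \<Rightarrow> nat set" where
  "cyc_interval n k c = {(c - 1 + j) mod n + 1 | j. j < k}"

end

theory Submission
  imports Defs
begin

text \<open>Whether two vertices I and J cross is decided by the symmetric difference alone. A crossing
  xs!a < ys!a < xs!b < ys!b of the sorted vectors leaves the following trace on I - J and J - I: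
  the element u = ys!a of J - I is immediately followed in the symmetric difference by the element
  v = xs!b of I - J, and below v the two differences have equally many elements; conversely every
  such pattern comes from a crossing. Hence I and J are noncrossing iff I - J and J - I are, which
  together with the invariance of noncrossing under order-preserving relabellings gives (ii)-(iv).
  Part (i) holds because reflecting [n] reverses both sorted vectors, and part (v) because a cyclic
  interval is an interval or the complement of one, so that one of the two differences lies in an
  interval avoided by the other, and then no arc can cross.\<close>

section \<open>Sorted lists and counting\<close>

definition count_below :: "'a::linorder set \<Rightarrow> 'a \<Rightarrow> nat" where
  "count_below X v = card {x \<in> X. x < v}"

lemma strict_sorted_nth_less_iff:
  fixes xs :: "'a::linorder list"
  assumes "sorted_wrt (<) xs" "i < length xs" "j < length xs"
  shows "xs ! i < xs ! j \<longleftrightarrow> i < j"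
proof (cases i j rule: linorder_cases)
  case greater
  then have "xs ! j < xs ! i" using sorted_wrt_nth_less[OF assms(1)] assms(2) by blast
  then show ?thesis using greater by simp
qed (use sorted_wrt_nth_less[OF assms(1)] assms(3) in auto)

lemma nth_less_iff_less_count_below:
  fixes xs :: "'a::linorder list"
  assumes xs: "sorted_wrt (<) xs" and i: "i < length xs"
  shows "xs ! i < v \<longleftrightarrow> i < count_below (set xs) v"
proof
  assume "xs ! i < v"
  have sub: "(!) xs ` {..i} \<subseteq> {x \<in> set xs. x < v}"
  proof
    fix x assume "x \<in> (!) xs ` {..i}"
    then obtain j where "j \<le> i" "x = xs ! j" by auto
    then show "x \<in> {x \<in> set xs. x < v}"
      using \<open>xs ! i < v\<close> i strict_sorted_nth_less_iff[OF xs, of j i] by (auto simp: le_less)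
  qed
  have "inj_on ((!) xs) {..i}"
    using xs i by (auto simp: inj_on_def nth_eq_iff_index_eq strict_sorted_iff)
  then have "card {..i} = card ((!) xs ` {..i})" by (simp add: card_image)
  also have "\<dots> \<le> count_below (set xs) v"
    unfolding count_below_def by (rule card_mono[OF _ sub]) simp
  finally show "i < count_below (set xs) v" by simp
next
  assume less: "i < count_below (set xs) v"
  show "xs ! i < v"
  proof (rule ccontr)
    assume "\<not> xs ! i < v"
    have "{x \<in> set xs. x < v} \<subseteq> (!) xs ` {..<i}"
    proof
      fix x assume "x \<in> {x \<in> set xs. x < v}"
      then obtain j where "j < length xs" "x = xs ! j" "xs ! j < v" by (auto simp: in_set_conv_nth)
      then have "j < i"
        using \<open>\<not> xs ! i < v\<close> i strict_sorted_nth_less_iff[OF xs, of j i]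
          less_le_trans[of "xs ! j" v "xs ! i"] by (simp add: not_less)
      then show "x \<in> (!) xs ` {..<i}" using \<open>x = xs ! j\<close> by simp
    qed
    then have "count_below (set xs) v \<le> card ((!) xs ` {..<i})"
      unfolding count_below_def by (simp add: card_mono)
    also have "\<dots> \<le> i" using card_image_le[of "{..<i}" "(!) xs"] by simp
    finally show False using less by simp
  qed
qed

lemma count_below_nth:
  fixes xs :: "'a::linorder list"
  assumes xs: "sorted_wrt (<) xs" and i: "i < length xs"
  shows "count_below (set xs) (xs ! i) = i"
proof -
  have "\<not> i < count_below (set xs) (xs ! i)"
    using nth_less_iff_less_count_below[OF xs i, of "xs ! i"] by simp
  moreover have "i - 1 < count_below (set xs) (xs ! i)" if "i > 0"
    using that i nth_less_iff_less_count_below[OF xs, of "i - 1" "xs ! i"]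
      strict_sorted_nth_less_iff[OF xs, of "i - 1" i] by simp
  ultimately show ?thesis by (cases "i = 0") auto
qed

lemma nth_count_below:
  fixes xs :: "'a::linorder list"
  assumes xs: "sorted_wrt (<) xs" and u: "u \<in> set xs"
  shows "count_below (set xs) u < length xs \<and> xs ! count_below (set xs) u = u"
  using u count_below_nth[OF xs] by (auto simp: in_set_conv_nth)

lemma mem_between_nth:
  fixes xs :: "'a::linorder list"
  assumes xs: "sorted_wrt (<) xs" and ij: "i < length xs" "j < length xs"
    and x: "x \<in> set xs" "xs ! i < x" "x < xs ! j"
  obtains l where "i < l" "l < j" "xs ! l = x"
proof -
  obtain l where l: "l < length xs" "xs ! l = x" using x(1) by (auto simp: in_set_conv_nth)
  then have "i < l" "l < j" using x ij strict_sorted_nth_less_iff[OF xs] by auto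
  then show thesis using l that by blast
qed

lemma count_below_diff:
  assumes "finite I" "finite J"
  shows "count_below I v + count_below (J - I) v = count_below J v + count_below (I - J) v"
proof -
  have split: "card {x \<in> X. x < v} = card {x \<in> X - Y. x < v} + card {x \<in> X \<inter> Y. x < v}"
    if "finite X" for X Y :: "'a set"
  proof -
    have "{x \<in> X. x < v} = {x \<in> X - Y. x < v} \<union> {x \<in> X \<inter> Y. x < v}" by blast
    then show ?thesis using that by (simp add: card_Un_disjoint disjoint_iff)
  qed
  show ?thesis
    using split[OF assms(1), of J] split[OF assms(2), of I] unfolding count_below_def
    by (simp add: Int_commute)
qed

lemma count_below_eq_if_gap:
  assumes "w \<le> v" "\<forall>x. w \<le> x \<and> x < v \<longrightarrow> x \<notin> X"
  shows "count_below X w = count_below X v"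
proof -
  have "{x \<in> X. x < w} = {x \<in> X. x < v}"
    using assms by (auto simp: not_less)
  then show ?thesis unfolding count_below_def by simp
qed

lemma count_below_Suc_if_gap:
  assumes "finite X" "u \<in> X" "u < v" "\<forall>x. u < x \<and> x < v \<longrightarrow> x \<notin> X"
  shows "count_below X v = Suc (count_below X u)"
proof -
  have "{x \<in> X. x < v} = insert u {x \<in> X. x < u}"
    using assms by (auto simp: not_less_iff_gr_or_eq)
  then show ?thesis unfolding count_below_def using assms by simp
qed

section \<open>Crossings are determined by the symmetric difference\<close>

definition crossing_at :: "nat list \<Rightarrow> nat list \<Rightarrow> nat \<Rightarrow> nat \<Rightarrow> bool" where
  "crossing_at xs ys a b \<longleftrightarrow> a < b \<and> b < length xs \<and> b < length ys
     \<and> (\<forall>l. a < l \<and> l < b \<longrightarrow> xs ! l = ys ! l) \<and> arcs_cross (xs ! a) (xs ! b) (ys ! a) (ys ! b)"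

lemma noncrossing_iff_no_crossing_at:
  "noncrossing I J \<longleftrightarrow> \<not> (\<exists>a b. crossing_at (sorted_list_of_set I) (sorted_list_of_set J) a b)"
  unfolding noncrossing_def crossing_at_def Let_def by blast

lemma crossing_at_commute: "crossing_at xs ys a b \<longleftrightarrow> crossing_at ys xs a b"
  unfolding crossing_at_def arcs_cross_def by auto

lemma noncrossing_commute: "noncrossing I J \<longleftrightarrow> noncrossing J I"
  unfolding noncrossing_iff_no_crossing_at using crossing_at_commute by blast

definition diff_crossing :: "nat set \<Rightarrow> nat set \<Rightarrow> bool" where
  "diff_crossing A B \<longleftrightarrow> (\<exists>u\<in>B. \<exists>v\<in>A. u < v \<and> (\<forall>w. u < w \<and> w < v \<longrightarrow> w \<notin> A \<and> w \<notin> B)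
     \<and> count_below A v = count_below B v)"

lemma crossing_at_values_adjacent:
  fixes xs ys :: "nat list"
  assumes xs: "sorted_wrt (<) xs" and ys: "sorted_wrt (<) ys" and len: "length xs = length ys"
    and cross: "crossing_at xs ys a b" and lower: "xs ! a < ys ! a"
  shows "ys ! a \<notin> set xs" and "xs ! b \<notin> set ys"
    and "ys ! a < w \<Longrightarrow> w < xs ! b \<Longrightarrow> w \<in> set xs \<longleftrightarrow> w \<in> set ys"
proof -
  have ab: "a < b" "b < length xs" "b < length ys" and a: "a < length xs" "a < length ys"
    and common: "\<forall>l. a < l \<and> l < b \<longrightarrow> xs ! l = ys ! l"
    using cross len unfolding crossing_at_def by auto
  have order: "xs ! a < ys ! a" "ys ! a < xs ! b" "xs ! b < ys ! b"
    using cross lower unfolding crossing_at_def arcs_cross_def by auto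
  have in_xs: "w \<in> set ys" if w: "w \<in> set xs" "xs ! a < w" "w < xs ! b" for w
  proof -
    obtain l where "a < l" "l < b" "xs ! l = w" by (rule mem_between_nth[OF xs a(1) ab(2) w])
    then show ?thesis using common ab nth_mem[of l ys] by auto
  qed
  have in_ys: "w \<in> set xs" if w: "w \<in> set ys" "ys ! a < w" "w < ys ! b" for w
  proof -
    obtain l where "a < l" "l < b" "ys ! l = w" by (rule mem_between_nth[OF ys a(2) ab(3) w])
    then show ?thesis using common ab nth_mem[of l xs] by auto
  qed
  show "ys ! a \<notin> set xs"
  proof
    assume "ys ! a \<in> set xs"
    then obtain l where "a < l" "l < b" "xs ! l = ys ! a"
      using mem_between_nth[OF xs a(1) ab(2)] order by blast
    then show False using common strict_sorted_nth_less_iff[OF ys a(2), of l] ab by auto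
  qed
  show "xs ! b \<notin> set ys"
  proof
    assume "xs ! b \<in> set ys"
    then obtain l where "a < l" "l < b" "ys ! l = xs ! b"
      using mem_between_nth[OF ys a(2) ab(3)] order by blast
    then show False using common strict_sorted_nth_less_iff[OF xs _ ab(2), of l] ab by auto
  qed
  show "w \<in> set xs \<longleftrightarrow> w \<in> set ys" if "ys ! a < w" "w < xs ! b"
    using in_xs in_ys order that by force
qed

lemma crossing_at_count_below:
  fixes xs ys :: "nat list"
  assumes xs: "sorted_wrt (<) xs" and ys: "sorted_wrt (<) ys" and len: "length xs = length ys"
    and cross: "crossing_at xs ys a b" and lower: "xs ! a < ys ! a"
  shows "count_below (set ys) (xs ! b) = b"
proof -
  have ab: "a < b" "b < length xs" "b < length ys"
    and common: "\<forall>l. a < l \<and> l < b \<longrightarrow> xs ! l = ys ! l"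
    and order: "ys ! a < xs ! b" "xs ! b < ys ! b"
    using cross len lower unfolding crossing_at_def arcs_cross_def by auto
  have "ys ! (b - 1) < xs ! b"
  proof (cases "b - 1 = a")
    case False
    then have "ys ! (b - 1) = xs ! (b - 1)" using common ab by simp
    then show ?thesis using strict_sorted_nth_less_iff[OF xs _ ab(2), of "b - 1"] ab by simp
  qed (use order in simp)
  then have "b - 1 < count_below (set ys) (xs ! b)"
    using nth_less_iff_less_count_below[OF ys, of "b - 1"] ab by simp
  moreover have "\<not> b < count_below (set ys) (xs ! b)"
    using nth_less_iff_less_count_below[OF ys ab(3), of "xs ! b"] order by simp
  ultimately show ?thesis by simp
qed

lemma diff_crossing_if_crossing_at:
  fixes xs ys :: "nat list"
  assumes xs: "sorted_wrt (<) xs" and ys: "sorted_wrt (<) ys" and len: "length xs = length ys"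
    and cross: "crossing_at xs ys a b" and lower: "xs ! a < ys ! a"
  shows "diff_crossing (set xs - set ys) (set ys - set xs)"
proof -
  note adjacent = crossing_at_values_adjacent[OF assms]
  have ab: "a < length ys" "b < length xs" "ys ! a < xs ! b"
    using cross len lower unfolding crossing_at_def arcs_cross_def by auto
  have "count_below (set ys) (xs ! b) = count_below (set xs) (xs ! b)"
    using crossing_at_count_below[OF assms] count_below_nth[OF xs ab(2)] by simp
  then have "count_below (set xs - set ys) (xs ! b) = count_below (set ys - set xs) (xs ! b)"
    using count_below_diff[of "set xs" "set ys" "xs ! b"] by simp
  moreover have "ys ! a \<in> set ys - set xs" "xs ! b \<in> set xs - set ys"
    using adjacent(1,2) ab by simp_all
  ultimately show ?thesis unfolding diff_crossing_def using ab(3) adjacent(3) by blast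
qed

lemma count_below_across_gap:
  assumes fin: "finite I" "finite J" and u: "u \<in> J - I" and "u < v"
    and gap: "\<forall>w. u < w \<and> w < v \<longrightarrow> w \<notin> I - J \<and> w \<notin> J - I"
    and balanced: "count_below (I - J) v = count_below (J - I) v"
  shows "count_below I u = Suc (count_below J u)"
    and "u < w \<Longrightarrow> w \<le> v \<Longrightarrow> count_below I w = count_below J w"
proof -
  have "count_below (I - J) u = count_below (I - J) v"
    by (rule count_below_eq_if_gap) (use \<open>u < v\<close> gap u in \<open>auto simp: le_less\<close>)
  moreover have "count_below (J - I) v = Suc (count_below (J - I) u)"
    by (rule count_below_Suc_if_gap) (use fin \<open>u < v\<close> gap u in auto)
  ultimately show "count_below I u = Suc (count_below J u)"
    using count_below_diff[OF fin, of u] balanced by simp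
next
  assume w: "u < w" "w \<le> v"
  have "count_below (I - J) w = count_below (I - J) v"
    by (rule count_below_eq_if_gap) (use w gap in auto)
  moreover have "count_below (J - I) w = count_below (J - I) v"
    by (rule count_below_eq_if_gap) (use w gap in auto)
  ultimately show "count_below I w = count_below J w"
    using count_below_diff[OF fin, of w] balanced by simp
qed

lemma crossing_at_if_diff_crossing:
  fixes xs ys :: "nat list"
  assumes xs: "sorted_wrt (<) xs" and ys: "sorted_wrt (<) ys" and len: "length xs = length ys"
    and "diff_crossing (set xs - set ys) (set ys - set xs)"
  obtains a b where "crossing_at xs ys a b" "xs ! a < ys ! a"
proof -
  obtain u v where u: "u \<in> set ys - set xs" and v: "v \<in> set xs - set ys" and "u < v"
    and gap: "\<forall>w. u < w \<and> w < v \<longrightarrow> w \<notin> set xs - set ys \<and> w \<notin> set ys - set xs"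
    and balanced: "count_below (set xs - set ys) v = count_below (set ys - set xs) v"
    using assms(4) unfolding diff_crossing_def by blast
  note counts = count_below_across_gap[OF finite_set finite_set u \<open>u < v\<close> gap balanced]
  \<comment> \<open>the crossing sits at the position of u in ys and the position of v in xs\<close>
  define a where "a = count_below (set ys) u"
  define b where "b = count_below (set xs) v"
  have a: "a < length ys" "ys ! a = u" and b: "b < length xs" "xs ! b = v"
    using nth_count_below[OF ys] nth_count_below[OF xs] u v unfolding a_def b_def by auto
  have "xs ! a < u"
    using nth_less_iff_less_count_below[OF xs, of a u] a len counts(1) unfolding a_def by simp
  have "\<not> ys ! b < v"
    using nth_less_iff_less_count_below[OF ys, of b v] b len counts(2)[OF \<open>u < v\<close>] unfolding b_def
    by simp
  then have "v < ys ! b" using v b len nth_mem[of b ys] by (auto simp: not_less le_less)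
  have "a < b" using strict_sorted_nth_less_iff[OF xs, of a b] \<open>xs ! a < u\<close> \<open>u < v\<close> a b len by simp
  have "xs ! l = ys ! l" if l: "a < l" "l < b" for l
  proof -
    have "l < length xs" using l b by simp
    have "xs ! l < v" using strict_sorted_nth_less_iff[OF xs \<open>l < length xs\<close> b(1)] l b by simp
    moreover have "\<not> xs ! l < u"
      using nth_less_iff_less_count_below[OF xs \<open>l < length xs\<close>, of u] counts(1) l unfolding a_def
      by simp
    moreover have "xs ! l \<noteq> u" using u nth_mem[OF \<open>l < length xs\<close>] by auto
    ultimately have between: "u < xs ! l" "xs ! l < v" by auto
    then have "xs ! l \<in> set ys" using gap nth_mem[OF \<open>l < length xs\<close>] by blast
    moreover have "count_below (set ys) (xs ! l) = l"
      using counts(2)[OF between(1)] between(2) count_below_nth[OF xs \<open>l < length xs\<close>] by simp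
    ultimately show ?thesis using nth_count_below[OF ys] by metis
  qed
  then have "crossing_at xs ys a b"
    unfolding crossing_at_def arcs_cross_def using \<open>a < b\<close> \<open>xs ! a < u\<close> \<open>u < v\<close> \<open>v < ys ! b\<close> a b len
    by auto
  then show thesis using that \<open>xs ! a < u\<close> a by simp
qed

lemma exists_crossing_at_iff:
  "(\<exists>a b. crossing_at xs ys a b) \<longleftrightarrow>
     (\<exists>a b. crossing_at xs ys a b \<and> xs ! a < ys ! a) \<or> (\<exists>a b. crossing_at ys xs a b \<and> ys ! a < xs ! a)"
proof -
  have "xs ! a \<noteq> ys ! a" if "crossing_at xs ys a b" for a b
    using that unfolding crossing_at_def arcs_cross_def by auto
  then show ?thesis using crossing_at_commute by (blast dest: linorder_neqE_nat)
qed

lemma noncrossing_iff_no_diff_crossing: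
  assumes "finite I" "finite J" "card I = card J"
  shows "noncrossing I J \<longleftrightarrow> \<not> diff_crossing (I - J) (J - I) \<and> \<not> diff_crossing (J - I) (I - J)"
proof -
  define xs where "xs = sorted_list_of_set I"
  define ys where "ys = sorted_list_of_set J"
  have xs: "sorted_wrt (<) xs" "set xs = I" and ys: "sorted_wrt (<) ys" "set ys = J"
    and len: "length xs = length ys"
    using assms unfolding xs_def ys_def by auto
  have "(\<exists>a b. crossing_at xs ys a b \<and> xs ! a < ys ! a) \<longleftrightarrow> diff_crossing (I - J) (J - I)"
    using diff_crossing_if_crossing_at[OF xs(1) ys(1) len] crossing_at_if_diff_crossing[OF xs(1) ys(1) len]
    unfolding xs(2) ys(2) by blast
  moreover have "(\<exists>a b. crossing_at ys xs a b \<and> ys ! a < xs ! a) \<longleftrightarrow> diff_crossing (J - I) (I - J)"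
    using diff_crossing_if_crossing_at[OF ys(1) xs(1) len[symmetric]]
      crossing_at_if_diff_crossing[OF ys(1) xs(1) len[symmetric]]
    unfolding xs(2) ys(2) by blast
  ultimately show ?thesis
    unfolding noncrossing_iff_no_crossing_at exists_crossing_at_iff xs_def[symmetric] ys_def[symmetric]
    by blast
qed

lemma card_Diff_commute:
  assumes "finite I" "finite J" "card I = card J"
  shows "card (I - J) = card (J - I)"
  using assms by (simp add: card_Diff_subset_Int Int_commute)

lemma noncrossing_iff_noncrossing_diff:
  assumes "finite I" "finite J" "card I = card J"
  shows "noncrossing I J \<longleftrightarrow> noncrossing (I - J) (J - I)"
proof -
  have "card (I - J) = card (J - I)" using card_Diff_commute[OF assms] .
  moreover have "(I - J) - (J - I) = I - J" "(J - I) - (I - J) = J - I" by auto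
  ultimately show ?thesis
    using noncrossing_iff_no_diff_crossing[OF assms] noncrossing_iff_no_diff_crossing[of "I - J" "J - I"]
      assms by simp
qed

section \<open>Monotone and antitone relabellings\<close>

lemma sorted_list_of_set_image_strict_mono_on:
  fixes f :: "'a::linorder \<Rightarrow> 'b::linorder"
  assumes "finite I" "strict_mono_on I f"
  shows "sorted_list_of_set (f ` I) = map f (sorted_list_of_set I)"
proof -
  have "sorted_wrt (<) (map f (sorted_list_of_set I))"
    by (rule sorted_wrt_map_mono[OF strict_sorted_list_of_set])
      (use assms in \<open>auto intro: strict_mono_onD\<close>)
  moreover have "card (f ` I) = card I"
    using card_image[OF strict_mono_on_imp_inj_on[OF assms(2)]] .
  ultimately show ?thesis
    using assms(1) by (subst sorted_list_of_set_unique[symmetric]) auto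
qed

lemma sorted_list_of_set_image_strict_antimono_on:
  fixes f :: "'a::linorder \<Rightarrow> 'b::linorder"
  assumes "finite I" "strict_antimono_on I f"
  shows "sorted_list_of_set (f ` I) = rev (map f (sorted_list_of_set I))"
proof -
  have "sorted_wrt (\<lambda>x y. y < x) (map f (sorted_list_of_set I))"
    by (rule sorted_wrt_map_mono[OF strict_sorted_list_of_set])
      (use assms in \<open>auto intro: monotone_onD\<close>)
  moreover have "inj_on f I"
  proof (rule inj_onI)
    fix x y assume "x \<in> I" "y \<in> I" "f x = f y"
    then show "x = y"
      using monotone_onD[OF assms(2), of x y] monotone_onD[OF assms(2), of y x]
      by (cases x y rule: linorder_cases) auto
  qed
  ultimately show ?thesis
    using assms(1) by (subst sorted_list_of_set_unique[symmetric]) (auto simp: sorted_wrt_rev card_image)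
qed

lemma arcs_cross_strict_mono_on:
  assumes "strict_mono_on S f" "p \<in> S" "p' \<in> S" "q \<in> S" "q' \<in> S"
  shows "arcs_cross (f p) (f p') (f q) (f q') \<longleftrightarrow> arcs_cross p p' q q'"
  unfolding arcs_cross_def using assms by (simp add: strict_mono_on_less)

lemma arcs_cross_strict_antimono_on:
  fixes f :: "nat \<Rightarrow> nat"
  assumes "strict_antimono_on S f" "p \<in> S" "p' \<in> S" "q \<in> S" "q' \<in> S"
  shows "arcs_cross (f p') (f p) (f q') (f q) \<longleftrightarrow> arcs_cross p p' q q'"
proof -
  have "f x < f y \<longleftrightarrow> y < x" if "x \<in> S" "y \<in> S" for x y
    using monotone_onD[OF assms(1) that] monotone_onD[OF assms(1) that(2,1)]
    by (cases x y rule: linorder_cases) auto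
  then show ?thesis unfolding arcs_cross_def using assms(2-) by auto
qed

lemma crossing_at_map_strict_mono_on:
  fixes f :: "nat \<Rightarrow> nat"
  assumes f: "strict_mono_on (set xs \<union> set ys) f"
  shows "crossing_at (map f xs) (map f ys) a b \<longleftrightarrow> crossing_at xs ys a b"
proof -
  have "(\<forall>l. a < l \<and> l < b \<longrightarrow> f (xs ! l) = f (ys ! l)) \<longleftrightarrow> (\<forall>l. a < l \<and> l < b \<longrightarrow> xs ! l = ys ! l)"
    and "arcs_cross (f (xs ! a)) (f (xs ! b)) (f (ys ! a)) (f (ys ! b)) \<longleftrightarrow>
         arcs_cross (xs ! a) (xs ! b) (ys ! a) (ys ! b)"
    if "a < b" "b < length xs" "b < length ys"
    using that strict_mono_on_eq[OF f] arcs_cross_strict_mono_on[OF f] by auto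
  then show ?thesis unfolding crossing_at_def by auto
qed

lemma noncrossing_image_strict_mono_on:
  fixes f :: "nat \<Rightarrow> nat"
  assumes "finite I" "finite J" "strict_mono_on (I \<union> J) f"
  shows "noncrossing (f ` I) (f ` J) \<longleftrightarrow> noncrossing I J"
proof -
  have "sorted_list_of_set (f ` I) = map f (sorted_list_of_set I)"
    and "sorted_list_of_set (f ` J) = map f (sorted_list_of_set J)"
    using assms by (auto intro!: sorted_list_of_set_image_strict_mono_on elim: monotone_on_subset)
  moreover have "strict_mono_on (set (sorted_list_of_set I) \<union> set (sorted_list_of_set J)) f"
    using assms by simp
  ultimately show ?thesis
    unfolding noncrossing_iff_no_crossing_at by (simp add: crossing_at_map_strict_mono_on)
qed

lemma crossing_at_rev_map_strict_antimono_on: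
  fixes f :: "nat \<Rightarrow> nat"
  assumes f: "strict_antimono_on (set xs \<union> set ys) f" and len: "length xs = length ys"
    and ab: "a < b" "b < length xs"
  shows "crossing_at (rev (map f xs)) (rev (map f ys)) (length xs - 1 - b) (length xs - 1 - a)
    \<longleftrightarrow> crossing_at xs ys a b"
proof -
  let ?L = "length xs"
  have inj: "inj_on f (set xs \<union> set ys)"
  proof (rule inj_onI)
    fix x y assume "x \<in> set xs \<union> set ys" "y \<in> set xs \<union> set ys" "f x = f y"
    then show "x = y"
      using monotone_onD[OF f, of x y] monotone_onD[OF f, of y x]
      by (cases x y rule: linorder_cases) auto
  qed
  have rev_nth_map: "rev (map f zs) ! (?L - 1 - i) = f (zs ! i)" if "length zs = ?L" "i < ?L" for zs i
    using that by (simp add: rev_nth Suc_diff_Suc)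
  have "(\<forall>l. ?L - 1 - b < l \<and> l < ?L - 1 - a \<longrightarrow> rev (map f xs) ! l = rev (map f ys) ! l)
    \<longleftrightarrow> (\<forall>l. a < l \<and> l < b \<longrightarrow> xs ! l = ys ! l)"
  proof (intro iffI allI impI)
    fix l assume rev_eq: "\<forall>l. ?L - 1 - b < l \<and> l < ?L - 1 - a \<longrightarrow> rev (map f xs) ! l = rev (map f ys) ! l"
      and l: "a < l \<and> l < b"
    have "?L - 1 - b < ?L - 1 - l" "?L - 1 - l < ?L - 1 - a" using l ab by arith+
    then have "rev (map f xs) ! (?L - 1 - l) = rev (map f ys) ! (?L - 1 - l)" using rev_eq by blast
    then have "f (xs ! l) = f (ys ! l)" using rev_nth_map[of xs l] rev_nth_map[of ys l] l ab len by simp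
    then show "xs ! l = ys ! l" using inj_onD[OF inj] l ab len by simp
  next
    fix l assume common: "\<forall>l. a < l \<and> l < b \<longrightarrow> xs ! l = ys ! l"
      and l: "?L - 1 - b < l \<and> l < ?L - 1 - a"
    have "a < ?L - 1 - l" "?L - 1 - l < b" using l ab by arith+
    then have "xs ! (?L - 1 - l) = ys ! (?L - 1 - l)" using common by blast
    moreover have "?L - 1 - (?L - 1 - l) = l" using l by arith
    ultimately show "rev (map f xs) ! l = rev (map f ys) ! l"
      using rev_nth_map[of xs "?L - 1 - l"] rev_nth_map[of ys "?L - 1 - l"] l ab len by simp
  qed
  moreover have "arcs_cross (f (xs ! b)) (f (xs ! a)) (f (ys ! b)) (f (ys ! a))
      \<longleftrightarrow> arcs_cross (xs ! a) (xs ! b) (ys ! a) (ys ! b)"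
    by (rule arcs_cross_strict_antimono_on[OF f]) (use ab len in auto)
  ultimately show ?thesis
    unfolding crossing_at_def using ab len rev_nth_map[of xs] rev_nth_map[of ys] by auto
qed

lemma noncrossing_image_strict_antimono_on:
  fixes f :: "nat \<Rightarrow> nat"
  assumes fin: "finite I" "finite J" and card: "card I = card J" and f: "strict_antimono_on (I \<union> J) f"
  shows "noncrossing (f ` I) (f ` J) \<longleftrightarrow> noncrossing I J"
proof -
  define xs where "xs = sorted_list_of_set I"
  define ys where "ys = sorted_list_of_set J"
  have len: "length xs = length ys" using card unfolding xs_def ys_def by simp
  have f': "strict_antimono_on (set xs \<union> set ys) f" using fin f unfolding xs_def ys_def by simp
  have "sorted_list_of_set (f ` I) = rev (map f xs)" "sorted_list_of_set (f ` J) = rev (map f ys)"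
    unfolding xs_def ys_def using fin f
    by (auto intro!: sorted_list_of_set_image_strict_antimono_on elim: monotone_on_subset)
  moreover have "(\<exists>a b. crossing_at (rev (map f xs)) (rev (map f ys)) a b) \<longleftrightarrow> (\<exists>a b. crossing_at xs ys a b)"
  proof
    assume "\<exists>a b. crossing_at (rev (map f xs)) (rev (map f ys)) a b"
    then obtain a b where cross: "crossing_at (rev (map f xs)) (rev (map f ys)) a b" by blast
    then have ab: "a < b" "b < length xs" unfolding crossing_at_def by auto
    have "crossing_at (rev (map f xs)) (rev (map f ys))
        (length xs - 1 - (length xs - 1 - a)) (length xs - 1 - (length xs - 1 - b))"
      using cross ab by simp
    then have "crossing_at xs ys (length xs - 1 - b) (length xs - 1 - a)"
      using crossing_at_rev_map_strict_antimono_on[OF f' len, of "length xs - 1 - b" "length xs - 1 - a"] ab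
      by simp
    then show "\<exists>a b. crossing_at xs ys a b" by blast
  next
    assume "\<exists>a b. crossing_at xs ys a b"
    then obtain a b where "crossing_at xs ys a b" by blast
    moreover have "a < b" "b < length xs" using calculation unfolding crossing_at_def by auto
    ultimately show "\<exists>a b. crossing_at (rev (map f xs)) (rev (map f ys)) a b"
      using crossing_at_rev_map_strict_antimono_on[OF f' len] by blast
  qed
  ultimately show ?thesis unfolding noncrossing_iff_no_crossing_at xs_def ys_def by simp
qed

lemma noncrossing_if_separated:
  assumes X: "X \<subseteq> {s..<t}" and Y: "Y \<inter> {s..<t} = {}" "finite Y"
  shows "noncrossing X Y"
  unfolding noncrossing_iff_no_crossing_at
proof
  assume "\<exists>a b. crossing_at (sorted_list_of_set X) (sorted_list_of_set Y) a b"
  then obtain a b where cross: "crossing_at (sorted_list_of_set X) (sorted_list_of_set Y) a b" by blast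
  define xs where "xs = sorted_list_of_set X"
  define ys where "ys = sorted_list_of_set Y"
  have "finite X" using X finite_subset by blast
  then have "set xs = X" "set ys = Y" using Y(2) unfolding xs_def ys_def by simp_all
  moreover have "a < length xs" "b < length xs" "a < length ys" "b < length ys"
    using cross unfolding crossing_at_def xs_def ys_def by auto
  ultimately have "xs ! a \<in> {s..<t}" "xs ! b \<in> {s..<t}" "ys ! a \<notin> {s..<t}" "ys ! b \<notin> {s..<t}"
    using X Y(1) nth_mem by blast+
  moreover have "xs ! a < ys ! a \<and> ys ! a < xs ! b \<or> xs ! a < ys ! b \<and> ys ! b < xs ! b"
    using cross unfolding crossing_at_def arcs_cross_def xs_def ys_def by auto
  ultimately show False by auto
qed

definition flag_complex :: "('a \<Rightarrow> 'a \<Rightarrow> bool) \<Rightarrow> 'a set \<Rightarrow> 'a set set" where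
  "flag_complex R W = {F. F \<subseteq> W \<and> (\<forall>I\<in>F. \<forall>J\<in>F. R I J)}"

lemma NC_faces_eq_flag_complex: "NC_faces k n = flag_complex noncrossing (V k n)"
  unfolding NC_faces_def flag_complex_def ..

lemma restrict_faces_flag_complex:
  "W \<subseteq> U \<Longrightarrow> restrict_faces (flag_complex R U) W = flag_complex R W"
  unfolding restrict_faces_def flag_complex_def by auto

lemma simplicial_iso_flag_complex:
  assumes f: "bij_betw f W1 W2" and R: "\<And>I J. I \<in> W1 \<Longrightarrow> J \<in> W1 \<Longrightarrow> R (f I) (f J) \<longleftrightarrow> R I J"
  shows "simplicial_iso f W1 (flag_complex R W1) W2 (flag_complex R W2)"
  unfolding simplicial_iso_def
proof (intro conjI allI impI f)
  fix F assume F: "F \<subseteq> W1"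
  then have "f ` F \<subseteq> W2" using bij_betw_imp_surj_on[OF f] by blast
  moreover have "(\<forall>I\<in>f ` F. \<forall>J\<in>f ` F. R I J) \<longleftrightarrow> (\<forall>I\<in>F. \<forall>J\<in>F. R I J)"
    using R F by blast
  ultimately show "F \<in> flag_complex R W1 \<longleftrightarrow> f ` F \<in> flag_complex R W2"
    using F unfolding flag_complex_def by simp
qed

lemma mem_maximal_face_flag_complex:
  assumes v: "v \<in> W" "\<And>I. I \<in> W \<Longrightarrow> R v I \<and> R I v"
    and F: "maximal_face (flag_complex R W) F"
  shows "v \<in> F"
proof -
  have "insert v F \<in> flag_complex R W"
    using F v unfolding maximal_face_def flag_complex_def by blast
  then show ?thesis using F unfolding maximal_face_def by blast
qed

lemma bij_betw_image_card_subsets: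
  assumes "bij_betw f A B"
  shows "bij_betw (image f) {X. X \<subseteq> A \<and> card X = m} {Y. Y \<subseteq> B \<and> card Y = m}"
proof -
  have Pow: "bij_betw (image f) (Pow A) (Pow B)" using bij_betw_Pow[OF assms] .
  have card: "card (f ` X) = card X" if "X \<subseteq> A" for X
    using card_image inj_on_subset[OF bij_betw_imp_inj_on[OF assms] that] by blast
  have "image f ` {X. X \<subseteq> A \<and> card X = m} = {Y. Y \<subseteq> B \<and> card Y = m}"
  proof
    show "image f ` {X. X \<subseteq> A \<and> card X = m} \<subseteq> {Y. Y \<subseteq> B \<and> card Y = m}"
      using card bij_betw_imp_surj_on[OF assms] by auto
    show "{Y. Y \<subseteq> B \<and> card Y = m} \<subseteq> image f ` {X. X \<subseteq> A \<and> card X = m}"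
    proof
      fix Y assume Y: "Y \<in> {Y. Y \<subseteq> B \<and> card Y = m}"
      then have "Y \<in> image f ` Pow A" using bij_betw_imp_surj_on[OF Pow] by simp
      then obtain X where "X \<subseteq> A" "Y = f ` X" by auto
      then show "Y \<in> image f ` {X. X \<subseteq> A \<and> card X = m}" using Y card by auto
    qed
  qed
  moreover have "inj_on (image f) {X. X \<subseteq> A \<and> card X = m}"
    using bij_betw_imp_inj_on[OF Pow] by (rule inj_on_subset) auto
  ultimately show ?thesis unfolding bij_betw_def by blast
qed

lemma bij_betw_complement_card_subsets:
  assumes "finite U" "k \<le> card U"
  shows "bij_betw (\<lambda>X. U - X) {X. X \<subseteq> U \<and> card X = k} {Y. Y \<subseteq> U \<and> card Y = card U - k}"
  by (rule bij_betw_byWitness[where f' = "\<lambda>Y. U - Y"])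
    (use assms in \<open>auto simp: double_diff card_Diff_subset finite_subset\<close>)

section \<open>The noncrossing complex\<close>

lemma mem_VD: "I \<in> V k n \<Longrightarrow> finite I \<and> I \<subseteq> {1..n} \<and> card I = k"
  unfolding V_def by (auto intro: finite_subset)

lemma simplicial_iso_NC_reflection:
  "simplicial_iso (\<lambda>I. (\<lambda>i. n + 1 - i) ` I) (V k n) (NC_faces k n) (V k n) (NC_faces k n)"
proof -
  let ?r = "\<lambda>i::nat. n + 1 - i"
  have "bij_betw ?r {1..n} {1..n}" by (rule bij_betw_byWitness[where f' = ?r]) auto
  then have bij: "bij_betw (image ?r) (V k n) (V k n)"
    unfolding V_def by (rule bij_betw_image_card_subsets)
  have "noncrossing (?r ` I) (?r ` J) \<longleftrightarrow> noncrossing I J" if "I \<in> V k n" "J \<in> V k n" for I J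
  proof (rule noncrossing_image_strict_antimono_on)
    show "strict_antimono_on (I \<union> J) ?r"
      using mem_VD[OF that(1)] mem_VD[OF that(2)] by (intro monotone_onI) auto
  qed (use mem_VD[OF that(1)] mem_VD[OF that(2)] in auto)
  then show ?thesis unfolding NC_faces_eq_flag_complex by (rule simplicial_iso_flag_complex[OF bij])
qed

lemma noncrossing_complement_iff:
  assumes "finite U" "I \<subseteq> U" "J \<subseteq> U" "card I = card J"
  shows "noncrossing (U - I) (U - J) \<longleftrightarrow> noncrossing I J"
proof -
  have fin: "finite I" "finite J" using assms finite_subset by auto
  have diffs: "(U - I) - (U - J) = J - I" "(U - J) - (U - I) = I - J" using assms(2,3) by auto
  have "card (U - I) = card (U - J)" using assms fin by (simp add: card_Diff_subset)
  then have "noncrossing (U - I) (U - J) \<longleftrightarrow> noncrossing (J - I) (I - J)"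
    using noncrossing_iff_noncrossing_diff[of "U - I" "U - J"] assms(1) unfolding diffs by simp
  also have "\<dots> \<longleftrightarrow> noncrossing I J"
    using noncrossing_iff_noncrossing_diff[OF fin assms(4)] noncrossing_commute by blast
  finally show ?thesis .
qed

lemma noncrossing_complement_iff_V:
  assumes "I \<in> V k n" "J \<in> V k n"
  shows "noncrossing ({1..n} - I) ({1..n} - J) \<longleftrightarrow> noncrossing I J"
  using mem_VD[OF assms(1)] mem_VD[OF assms(2)] by (intro noncrossing_complement_iff) auto

lemma simplicial_iso_NC_complement:
  assumes "k \<le> n"
  shows "simplicial_iso (\<lambda>I. {1..n} - I) (V k n) (NC_faces k n) (V (n - k) n) (NC_faces (n - k) n)"
proof -
  have "bij_betw (\<lambda>I. {1..n} - I) (V k n) (V (n - k) n)"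
    using bij_betw_complement_card_subsets[of "{1..n}" k] assms unfolding V_def by simp
  then show ?thesis unfolding NC_faces_eq_flag_complex
    by (rule simplicial_iso_flag_complex) (rule noncrossing_complement_iff_V)
qed

lemma relabel_strict_mono_on: "finite S \<Longrightarrow> strict_mono_on S (relabel S)"
  unfolding relabel_def
  by (intro monotone_onI psubset_card_mono) (auto simp: less_le_not_le)

lemma relabel_image_mem_V:
  assumes "finite S" "X \<subseteq> S"
  shows "relabel S ` X \<in> V (card X) (card S)"
proof -
  have "relabel S x \<in> {1..card S}" if "x \<in> S" for x
  proof -
    have "x \<in> {y \<in> S. y \<le> x}" using that by simp
    then have "0 < relabel S x" unfolding relabel_def using assms(1) card_gt_0_iff by fastforce
    moreover have "relabel S x \<le> card S" unfolding relabel_def using assms(1) by (intro card_mono) auto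
    ultimately show ?thesis by simp
  qed
  moreover have "inj_on (relabel S) X"
    using strict_mono_on_imp_inj_on[OF relabel_strict_mono_on[OF assms(1)]] assms(2) inj_on_subset by blast
  ultimately show ?thesis unfolding V_def using assms(2) by (auto simp: card_image)
qed

lemma noncrossing_iff_noncrossing_relabel_diff:
  assumes "finite I" "finite J" "card I = card J"
  defines "S \<equiv> (I - J) \<union> (J - I)"
  shows "noncrossing I J \<longleftrightarrow> noncrossing (relabel S ` (I - J)) (relabel S ` (J - I))"
proof -
  have "strict_mono_on ((I - J) \<union> (J - I)) (relabel S)"
    using assms(1,2) unfolding S_def by (intro relabel_strict_mono_on) simp
  then show ?thesis
    using noncrossing_iff_noncrossing_diff[OF assms(1-3)] noncrossing_image_strict_mono_on assms(1,2)
    by simp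
qed

lemma relabel_sym_diff:
  assumes "finite I" "finite J" "card I = card J"
  shows "let S = (I - J) \<union> (J - I); m = card (I - J) in
           card (J - I) = m
         \<and> relabel S ` (I - J) \<in> V m (2 * m) \<and> relabel S ` (J - I) \<in> V m (2 * m)
         \<and> (noncrossing I J \<longleftrightarrow> noncrossing (relabel S ` (I - J)) (relabel S ` (J - I)))"
proof -
  define S where "S = (I - J) \<union> (J - I)"
  have m: "card (J - I) = card (I - J)" using card_Diff_commute[OF assms] by simp
  then have "card S = 2 * card (I - J)"
    unfolding S_def using assms by (subst card_Un_disjoint) auto
  then have "relabel S ` (I - J) \<in> V (card (I - J)) (2 * card (I - J))"
    and "relabel S ` (J - I) \<in> V (card (I - J)) (2 * card (I - J))"
    using relabel_image_mem_V[of S "I - J"] relabel_image_mem_V[of S "J - I"] assms m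
    unfolding S_def by auto
  then show ?thesis
    using m noncrossing_iff_noncrossing_relabel_diff[OF assms] unfolding S_def Let_def by simp
qed

lemma strict_mono_on_del_relabel: "strict_mono_on (- {b}) (del_relabel b)"
  unfolding del_relabel_def by (intro monotone_onI) auto

lemma bij_betw_del_relabel:
  assumes "b \<in> {1..n}"
  shows "bij_betw (del_relabel b) ({1..n} - {b}) {1..n - 1}"
  by (rule bij_betw_byWitness[where f' = "\<lambda>x. if x < b then x else Suc x"])
    (use assms in \<open>auto simp: del_relabel_def\<close>)

lemma noncrossing_del_relabel_iff:
  assumes fin: "finite I" "finite J" and card: "card I = card J" and b: "b \<in> I \<longleftrightarrow> b \<in> J"
  shows "noncrossing (del_relabel b ` (I - {b})) (del_relabel b ` (J - {b})) \<longleftrightarrow> noncrossing I J"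
proof -
  have "strict_mono_on ((I - {b}) \<union> (J - {b})) (del_relabel b)"
    using strict_mono_on_del_relabel by (rule monotone_on_subset) auto
  then have "noncrossing (del_relabel b ` (I - {b})) (del_relabel b ` (J - {b}))
      \<longleftrightarrow> noncrossing (I - {b}) (J - {b})"
    using fin by (intro noncrossing_image_strict_mono_on) auto
  also have "\<dots> \<longleftrightarrow> noncrossing (I - J) (J - I)"
  proof -
    have "(I - {b}) - (J - {b}) = I - J" "(J - {b}) - (I - {b}) = J - I" using b by auto
    moreover have "card (I - {b}) = card (J - {b})" using fin card b by auto
    ultimately show ?thesis using noncrossing_iff_noncrossing_diff[of "I - {b}" "J - {b}"] fin by simp
  qed
  also have "\<dots> \<longleftrightarrow> noncrossing I J"
    using noncrossing_iff_noncrossing_diff[OF fin card] by simp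
  finally show ?thesis .
qed

lemma simplicial_iso_NC_containing:
  assumes b: "b \<in> {1..n}" and k: "1 \<le> k"
  shows "simplicial_iso (\<lambda>I. del_relabel b ` (I - {b}))
    {I \<in> V k n. b \<in> I} (restrict_faces (NC_faces k n) {I \<in> V k n. b \<in> I})
    (V (k - 1) (n - 1)) (NC_faces (k - 1) (n - 1))"
proof -
  have "bij_betw (\<lambda>I. I - {b}) {I \<in> V k n. b \<in> I} {X. X \<subseteq> {1..n} - {b} \<and> card X = k - 1}"
    by (rule bij_betw_byWitness[where f' = "insert b"])
      (use b k in \<open>auto simp: V_def card_insert_if finite_subset\<close>)
  moreover have "bij_betw (image (del_relabel b))
      {X. X \<subseteq> {1..n} - {b} \<and> card X = k - 1} (V (k - 1) (n - 1))"
    unfolding V_def by (rule bij_betw_image_card_subsets[OF bij_betw_del_relabel[OF b]])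
  ultimately have "bij_betw (image (del_relabel b) \<circ> (\<lambda>I. I - {b})) {I \<in> V k n. b \<in> I} (V (k - 1) (n - 1))"
    by (rule bij_betw_trans)
  then show ?thesis
    unfolding NC_faces_eq_flag_complex restrict_faces_flag_complex[OF Collect_subset] comp_def
    by (rule simplicial_iso_flag_complex) (use mem_VD noncrossing_del_relabel_iff in auto)
qed

lemma simplicial_iso_NC_avoiding:
  assumes b: "b \<in> {1..n}"
  shows "simplicial_iso (\<lambda>I. del_relabel b ` (I - {b}))
    {I \<in> V k n. b \<notin> I} (restrict_faces (NC_faces k n) {I \<in> V k n. b \<notin> I})
    (V k (n - 1)) (NC_faces k (n - 1))"
proof -
  have "{I \<in> V k n. b \<notin> I} = {X. X \<subseteq> {1..n} - {b} \<and> card X = k}" unfolding V_def by auto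
  then have "bij_betw (image (del_relabel b)) {I \<in> V k n. b \<notin> I} (V k (n - 1))"
    unfolding V_def using bij_betw_image_card_subsets[OF bij_betw_del_relabel[OF b]] by simp
  then have "bij_betw (\<lambda>I. del_relabel b ` (I - {b})) {I \<in> V k n. b \<notin> I} (V k (n - 1))"
    by (rule bij_betw_cong[THEN iffD1, rotated]) simp
  then show ?thesis
    unfolding NC_faces_eq_flag_complex restrict_faces_flag_complex[OF Collect_subset]
  proof (rule simplicial_iso_flag_complex)
    fix I J assume "I \<in> {I \<in> V k n. b \<notin> I}" "J \<in> {I \<in> V k n. b \<notin> I}"
    then show "noncrossing (del_relabel b ` (I - {b})) (del_relabel b ` (J - {b})) \<longleftrightarrow> noncrossing I J"
      using mem_VD by (intro noncrossing_del_relabel_iff) auto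
  qed
qed

lemma cyc_interval_eq_image:
  assumes c: "c \<in> {1..n}" and k: "k \<le> n"
  shows "cyc_interval n k c = (\<lambda>j. if c + j \<le> n then c + j else c + j - n) ` {..<k}"
proof -
  have "(c - 1 + j) mod n + 1 = (if c + j \<le> n then c + j else c + j - n)" if "j < k" for j
  proof (cases "c + j \<le> n")
    case False
    then have "(c - 1 + j) mod n = c - 1 + j - n" using c k that by (simp add: mod_if)
    then show ?thesis using False c by simp
  qed (use c in simp)
  then show ?thesis unfolding cyc_interval_def by force
qed

lemma cyc_interval_eq:
  assumes c: "c \<in> {1..n}" and k: "k \<le> n"
  shows "cyc_interval n k c = (if c + k \<le> n + 1 then {c..<c + k} else {1..n} - {c + k - n..<c})"
proof (cases "c + k \<le> n + 1")
  case True
  then have "(\<lambda>j. if c + j \<le> n then c + j else c + j - n) ` {..<k} = (\<lambda>j. c + j) ` {..<k}"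
    by (intro image_cong) auto
  then show ?thesis
    unfolding cyc_interval_eq_image[OF assms] using True by (simp add: lessThan_atLeast0 add.commute)
next
  case False
  have sup: "x \<in> (\<lambda>j. if c + j \<le> n then c + j else c + j - n) ` {..<k}"
    if "x \<in> {1..n} - {c + k - n..<c}" for x
  proof (cases "c \<le> x")
    case True
    then show ?thesis using that by (intro image_eqI[where x = "x - c"]) (use False in auto)
  next
    case False
    then show ?thesis using that c by (intro image_eqI[where x = "x + n - c"]) auto
  qed
  have sub: "(\<lambda>j. if c + j \<le> n then c + j else c + j - n) ` {..<k} \<subseteq> {1..n} - {c + k - n..<c}"
  proof (rule image_subsetI)
    fix j assume "j \<in> {..<k}"
    then show "(if c + j \<le> n then c + j else c + j - n) \<in> {1..n} - {c + k - n..<c}"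
      using c k by (cases "c + j \<le> n"; simp; arith)
  qed
  show ?thesis
    unfolding cyc_interval_eq_image[OF assms] by (subst if_not_P[OF False]) (use sub sup in blast)
qed

lemma cyc_interval_mem_V:
  assumes "c \<in> {1..n}" "k \<le> n"
  shows "cyc_interval n k c \<in> V k n"
proof (cases "c + k \<le> n + 1")
  case True
  then show ?thesis using assms unfolding cyc_interval_eq[OF assms] V_def by auto
next
  case False
  have "card ({1..n} - {c + k - n..<c}) = k"
    using False assms by (subst card_Diff_subset) auto
  then show ?thesis using False assms unfolding cyc_interval_eq[OF assms] V_def by auto
qed

lemma noncrossing_cyc_interval:
  assumes c: "c \<in> {1..n}" and k: "k \<le> n" and I: "I \<in> V k n"
  shows "noncrossing (cyc_interval n k c) I"
proof -
  let ?C = "cyc_interval n k c"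
  have C: "finite ?C" "card ?C = k" and I': "finite I" "I \<subseteq> {1..n}" "card I = k"
    using mem_VD[OF cyc_interval_mem_V[OF c k]] mem_VD[OF I] by auto
  have "noncrossing (?C - I) (I - ?C)"
  proof (cases "c + k \<le> n + 1")
    case True
    then show ?thesis
      using I' unfolding cyc_interval_eq[OF c k] by (intro noncrossing_if_separated) auto
  next
    case False
    have "noncrossing (I - ?C) (?C - I)"
      using False I' unfolding cyc_interval_eq[OF c k] by (intro noncrossing_if_separated) auto
    then show ?thesis using noncrossing_commute by blast
  qed
  then show ?thesis using noncrossing_iff_noncrossing_diff C I' by simp
qed

lemma cyc_interval_mem_maximal_face:
  assumes "c \<in> {1..n}" "k \<le> n" "maximal_face (NC_faces k n) F"
  shows "cyc_interval n k c \<in> F"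
  using assms(3) unfolding NC_faces_eq_flag_complex
  by (rule mem_maximal_face_flag_complex[rotated 2])
    (use cyc_interval_mem_V[OF assms(1,2)] noncrossing_cyc_interval[OF assms(1,2)] noncrossing_commute
      in auto)

theorem proposition1p5:
  fixes k n :: nat
  assumes "1 \<le> k" and "k \<le> n - 1"
  shows
    \<comment> \<open>(i)\<close>
    "simplicial_iso (\<lambda>I. (\<lambda>i. n + 1 - i) ` I) (V k n) (NC_faces k n) (V k n) (NC_faces k n)
     \<comment> \<open>(ii)\<close>
   \<and> simplicial_iso (\<lambda>I. {1..n} - I) (V k n) (NC_faces k n) (V (n - k) n) (NC_faces (n - k) n)
   \<and> (\<forall>I\<in>V k n. \<forall>J\<in>V k n. noncrossing I J \<longleftrightarrow> noncrossing ({1..n} - I) ({1..n} - J))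
     \<comment> \<open>(iii)\<close>
   \<and> (\<forall>I\<in>V k n. \<forall>J\<in>V k n. I \<noteq> J \<longrightarrow>
        (let S = (I - J) \<union> (J - I); m = card (I - J) in
           card (J - I) = m
         \<and> relabel S ` (I - J) \<in> V m (2 * m) \<and> relabel S ` (J - I) \<in> V m (2 * m)
         \<and> (noncrossing I J \<longleftrightarrow> noncrossing (relabel S ` (I - J)) (relabel S ` (J - I)))))
     \<comment> \<open>(iv)\<close>
   \<and> (\<forall>b\<in>{1..n}.
        simplicial_iso (\<lambda>I. del_relabel b ` (I - {b}))
          {I \<in> V k n. b \<in> I} (restrict_faces (NC_faces k n) {I \<in> V k n. b \<in> I})
          (V (k - 1) (n - 1)) (NC_faces (k - 1) (n - 1))
      \<and> simplicial_iso (\<lambda>I. del_relabel b ` (I - {b}))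
          {I \<in> V k n. b \<notin> I} (restrict_faces (NC_faces k n) {I \<in> V k n. b \<notin> I})
          (V k (n - 1)) (NC_faces k (n - 1)))
     \<comment> \<open>(v)\<close>
   \<and> (\<forall>c\<in>{1..n}.
        cyc_interval n k c \<in> V k n
      \<and> (\<forall>I\<in>V k n. noncrossing (cyc_interval n k c) I)
      \<and> (\<forall>F. maximal_face (NC_faces k n) F \<longrightarrow> cyc_interval n k c \<in> F))"
proof -
  have "k \<le> n" using assms by linarith
  then show ?thesis
    using assms(1) mem_VD
    by (intro conjI ballI impI allI simplicial_iso_NC_reflection simplicial_iso_NC_complement
        noncrossing_complement_iff_V[symmetric] relabel_sym_diff simplicial_iso_NC_containing
        simplicial_iso_NC_avoiding cyc_interval_mem_V noncrossing_cyc_interval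
        cyc_interval_mem_maximal_face) auto
qed

end
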